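(* Let $\mu\in\mathbb F_q\setminus\{0\}$. Every line of $\mathcal W_0$ has $0$, $1$, $2$ or $q+1$ points in common with $\mathcal Q_\mu$, and each of these four values occurs for some line of $\mathcal W_0$.
   Context: Let $q$ be an even prime power and $n\ge 2$ an integer. Let $\mathrm{PG}(2n+1,q)$ have homogeneous coordinates $(X_1,\dots,X_{2n+2})$. Fix $\delta\in\mathbb F_q$ such that $X^2+X+\delta$ is irreducible over $\mathbb F_q$. For $\mu\in\mathbb F_q$ let $\mathcal Q_\mu$ be the elliptic quadric $X_1^2+X_1X_{2n+2}+\delta X_{2n+2}^2+\sum_{i=2}^{n+1}X_iX_{2n+3-i}+\mu(X_{2n}^2+X_{2n}X_{2n+1}+\delta X_{2n+1}^2)=0$. Let $\mathcal W_0$ be the symplectic polar space defined by the alternating form $B_0(X,Y)=\sum_{i=1}^{2n+2}X_iY_{2n+3-i}$; its lines are the totally isotropic lines. *)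

theory Defs
  imports "HOL-Computational_Algebra.Polynomial" "HOL-Library.Cardinality"
begin

text \<open>Vectors of F_q^(2n+2), coordinates indexed 1..2n+2 (all other coordinates zero).\<close>
definition vecs :: "nat \<Rightarrow> (nat \<Rightarrow> 'a::field) set" where
  "vecs n = {x. \<forall>i. (i < 1 \<or> i > 2*n+2) \<longrightarrow> x i = 0}"

definition pt :: "(nat \<Rightarrow> 'a::field) \<Rightarrow> (nat \<Rightarrow> 'a) set" where
  "pt x = {(\<lambda>i. c * x i) | c. c \<noteq> 0}"

definition B0 :: "nat \<Rightarrow> (nat \<Rightarrow> 'a::field) \<Rightarrow> (nat \<Rightarrow> 'a) \<Rightarrow> 'a" where
  "B0 n x y = (\<Sum>i=1..2*n+2. x i * y (2*n+3-i))"

definition Qmu :: "nat \<Rightarrow> 'a::field \<Rightarrow> 'a \<Rightarrow> (nat \<Rightarrow> 'a) \<Rightarrow> 'a" where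
  "Qmu n \<delta> \<mu> x = x 1 ^ 2 + x 1 * x (2*n+2) + \<delta> * x (2*n+2) ^ 2
     + (\<Sum>i=2..n+1. x i * x (2*n+3-i))
     + \<mu> * (x (2*n) ^ 2 + x (2*n) * x (2*n+1) + \<delta> * x (2*n+1) ^ 2)"

definition line_pts :: "(nat \<Rightarrow> 'a::field) \<Rightarrow> (nat \<Rightarrow> 'a) \<Rightarrow> (nat \<Rightarrow> 'a) set set" where
  "line_pts u v = {pt (\<lambda>i. a * u i + b * v i) | a b. a \<noteq> 0 \<or> b \<noteq> 0}"

definition W0_line :: "nat \<Rightarrow> (nat \<Rightarrow> 'a::field) set set \<Rightarrow> bool" where
  "W0_line n L \<longleftrightarrow> (\<exists>u v. u \<in> vecs n \<and> v \<in> vecs n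
     \<and> (\<forall>a b. (\<forall>i. a * u i + b * v i = 0) \<longrightarrow> a = 0 \<and> b = 0)
     \<and> (\<forall>a b c d. B0 n (\<lambda>i. a * u i + b * v i) (\<lambda>i. c * u i + d * v i) = 0)
     \<and> L = line_pts u v)"

definition on_quadric :: "nat \<Rightarrow> 'a::field \<Rightarrow> 'a \<Rightarrow> (nat \<Rightarrow> 'a) set set \<Rightarrow> (nat \<Rightarrow> 'a) set set" where
  "on_quadric n \<delta> \<mu> L = {P \<in> L. \<forall>x\<in>P. Qmu n \<delta> \<mu> x = 0}"

end

theory Submission
  imports Defs
begin

text \<open>
  On a projective line spanned by independent vectors u, v the quadric restricts to a binary
  quadratic form a^2 Q(u) + a b C + b^2 Q(v). Either this form vanishes identically and all
  q + 1 points of the line lie on the quadric, or it has at most two projective zeros.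
  The four values are attained on totally isotropic lines inside the span of the unit vectors
  e_2, e_3, e_2n, e_(2n+1), where the irreducibility of X^2 + X + \<delta> yields a line missing
  the quadric. Since q is even the field has characteristic 2, so B_0 is alternating and a
  span is totally isotropic as soon as B_0(u, v) = 0.
\<close>

lemma even_card_if_fixpoint_free_involution:
  assumes "finite S" and "\<And>x. x \<in> S \<Longrightarrow> f x \<in> S"
    and "\<And>x. x \<in> S \<Longrightarrow> f (f x) = x" and "\<And>x. x \<in> S \<Longrightarrow> f x \<noteq> x"
  shows "even (card S)"
proof -
  let ?C = "(\<lambda>x. {x, f x}) ` S"
  have "\<Union>?C = S" using assms(2) by auto
  moreover have "2 * card ?C = card (\<Union>?C)"
  proof (rule card_partition)
    show "finite ?C" "finite (\<Union>?C)" using assms(1,2) by auto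
    show "\<And>c. c \<in> ?C \<Longrightarrow> card c = 2" using assms(4) by (fastforce simp: card_insert_if)
    show "\<And>c1 c2. c1 \<in> ?C \<Longrightarrow> c2 \<in> ?C \<Longrightarrow> c1 \<noteq> c2 \<Longrightarrow> c1 \<inter> c2 = {}"
      using assms(3) by (auto, metis+)
  qed
  ultimately show ?thesis by (metis dvd_triv_left)
qed

lemma two_eq_zero_if_even_card:
  assumes "even CARD('a::{field,finite})"
  shows "(2::'a) = 0"
proof (rule ccontr)
  assume two: "(2::'a) \<noteq> 0"
  have "even (card (UNIV - {0::'a}))"
  proof (rule even_card_if_fixpoint_free_involution[where f = uminus])
    show "- x \<noteq> x" if "x \<in> UNIV - {0::'a}" for x
      using that two by (metis DiffD2 add_eq_0_iff2 mult_2 no_zero_divisors singletonI)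
  qed auto
  then show False using assms by (simp add: card_Diff_subset)
qed

definition independent_pair :: "(nat \<Rightarrow> 'a::field) \<Rightarrow> (nat \<Rightarrow> 'a) \<Rightarrow> bool" where
  "independent_pair u v \<longleftrightarrow> (\<forall>a b. (\<forall>i. a * u i + b * v i = 0) \<longrightarrow> a = 0 \<and> b = 0)"

lemma independent_pairD:
  "independent_pair u v \<Longrightarrow> (\<And>i. a * u i + b * v i = 0) \<Longrightarrow> a = 0 \<and> b = 0"
  unfolding independent_pair_def by blast

lemma pt_mult:
  assumes "(c::'a::field) \<noteq> 0"
  shows "pt (\<lambda>i. c * x i) = pt x"
proof (rule set_eqI)
  fix y
  have "(\<exists>d. y = (\<lambda>i. d * (c * x i)) \<and> d \<noteq> 0) \<longleftrightarrow> (\<exists>d. y = (\<lambda>i. d * x i) \<and> d \<noteq> 0)"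
  proof
    assume "\<exists>d. y = (\<lambda>i. d * (c * x i)) \<and> d \<noteq> 0"
    then show "\<exists>d. y = (\<lambda>i. d * x i) \<and> d \<noteq> 0"
      using assms by (metis (no_types) mult.assoc no_zero_divisors)
  next
    assume "\<exists>d. y = (\<lambda>i. d * x i) \<and> d \<noteq> 0"
    then obtain d where "y = (\<lambda>i. d * x i)" "d \<noteq> 0" by blast
    then show "\<exists>d. y = (\<lambda>i. d * (c * x i)) \<and> d \<noteq> 0"
      using assms by (intro exI[of _ "d / c"]) simp
  qed
  then show "y \<in> pt (\<lambda>i. c * x i) \<longleftrightarrow> y \<in> pt x" by (simp add: pt_def)
qed

lemma self_in_pt: "x \<in> pt (x::nat \<Rightarrow> 'a::field)"
  unfolding pt_def by (rule CollectI, rule exI[where x=1]) auto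

lemma pt_eq_imp_multiple:
  "pt x = pt (y::nat \<Rightarrow> 'a::field) \<Longrightarrow> \<exists>c. c \<noteq> 0 \<and> y = (\<lambda>i. c * x i)"
  using self_in_pt[of y] by (auto simp: pt_def)

lemma Qmu_mult: "Qmu n \<delta> \<mu> (\<lambda>i. c * x i) = c^2 * Qmu n \<delta> \<mu> (x :: nat \<Rightarrow> 'a::field)"
  unfolding Qmu_def by (simp add: sum_distrib_left power2_eq_square algebra_simps)

lemma Qmu_vanishes_on_pt_iff:
  "(\<forall>y\<in>pt x. Qmu n \<delta> \<mu> y = 0) \<longleftrightarrow> Qmu n \<delta> \<mu> (x :: nat \<Rightarrow> 'a::field) = 0"
  using self_in_pt[of x] by (auto simp: pt_def Qmu_mult)

lemma line_pts_eq_chart: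
  "line_pts u v = insert (pt v) (range (\<lambda>t. pt (\<lambda>i. u i + t * v i)))" (is "_ = ?R")
proof
  have "pt (\<lambda>i. a * u i + b * v i) \<in> ?R" if "a \<noteq> 0 \<or> b \<noteq> 0" for a b
  proof (cases "a = 0")
    case True
    then show ?thesis using that pt_mult[of b v] by simp
  next
    case False
    have "(\<lambda>i. a * u i + b * v i) = (\<lambda>i. a * (u i + (b / a) * v i))"
      using False by (simp add: fun_eq_iff field_simps)
    then have "pt (\<lambda>i. a * u i + b * v i) = pt (\<lambda>i. u i + (b / a) * v i)"
      by (simp only: pt_mult[OF False])
    then show ?thesis by (simp only:) (rule insertI2, rule rangeI)
  qed
  then show "line_pts u v \<subseteq> ?R" unfolding line_pts_def by auto
next
  have "pt v \<in> line_pts u v"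
    unfolding line_pts_def by (intro CollectI exI[of _ 0] exI[of _ 1]) simp
  moreover have "pt (\<lambda>i. u i + t * v i) \<in> line_pts u v" for t
    unfolding line_pts_def by (intro CollectI exI[of _ 1] exI[of _ t]) simp
  ultimately show "?R \<subseteq> line_pts u v" by blast
qed

lemma inj_line_chart:
  assumes "independent_pair u v"
  shows "inj (\<lambda>t. pt (\<lambda>i. u i + t * v i))"
proof (rule injI)
  fix s t assume "pt (\<lambda>i. u i + s * v i) = pt (\<lambda>i. u i + t * v i)"
  then obtain c where c: "(\<lambda>i. u i + t * v i) = (\<lambda>i. c * (u i + s * v i))"
    using pt_eq_imp_multiple by blast
  have "(1 - c) * u i + (t - c * s) * v i = 0" for i
    using fun_cong[OF c, of i] by (simp add: algebra_simps)
  then have "1 - c = 0 \<and> t - c * s = 0" by (rule independent_pairD[OF assms])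
  then show "s = t" by simp
qed

lemma pt_notin_line_chart:
  assumes "independent_pair u v"
  shows "pt v \<notin> range (\<lambda>t. pt (\<lambda>i. u i + t * v i))"
proof
  assume "pt v \<in> range (\<lambda>t. pt (\<lambda>i. u i + t * v i))"
  then obtain t where "pt v = pt (\<lambda>i. u i + t * v i)" by blast
  then obtain c where c: "(\<lambda>i. u i + t * v i) = (\<lambda>i. c * v i)"
    using pt_eq_imp_multiple by blast
  have "1 * u i + (t - c) * v i = 0" for i
    using fun_cong[OF c, of i] by (simp add: algebra_simps)
  then have "(1::'a) = 0 \<and> t - c = 0" by (rule independent_pairD[OF assms])
  then show False by simp
qed

lemma card_line_pts:
  fixes u v :: "nat \<Rightarrow> 'a::{field,finite}"
  assumes "independent_pair u v"
  shows "card (line_pts u v) = CARD('a) + 1"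
proof -
  have "card (range (\<lambda>t. pt (\<lambda>i. u i + t * v i))) = CARD('a)"
    using inj_line_chart[OF assms] by (simp add: card_image)
  then show ?thesis
    unfolding line_pts_eq_chart using pt_notin_line_chart[OF assms] by simp
qed

lemma on_quadric_line_pts:
  "on_quadric n \<delta> \<mu> (line_pts u v) =
     (if Qmu n \<delta> \<mu> v = 0 then {pt v} else {})
     \<union> (\<lambda>t. pt (\<lambda>i. u i + t * v i)) ` {t. Qmu n \<delta> \<mu> (\<lambda>i. u i + t * v i) = 0}"
proof -
  have filter_insert_range:
    "{P \<in> insert a (range g). \<phi> P} = (if \<phi> a then {a} else {}) \<union> g ` {t. \<phi> (g t)}"
    for a and g :: "'a \<Rightarrow> 'b" and \<phi> by auto
  show ?thesis
    unfolding on_quadric_def line_pts_eq_chart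
    by (simp only: filter_insert_range Qmu_vanishes_on_pt_iff)
qed

lemma card_on_quadric_line_pts:
  fixes u v :: "nat \<Rightarrow> 'a::{field,finite}"
  assumes "independent_pair u v"
  shows "card (on_quadric n \<delta> \<mu> (line_pts u v)) =
     (if Qmu n \<delta> \<mu> v = 0 then 1 else 0) + card {t. Qmu n \<delta> \<mu> (\<lambda>i. u i + t * v i) = 0}"
proof -
  let ?chart = "\<lambda>t. pt (\<lambda>i. u i + t * v i)" and ?R = "{t. Qmu n \<delta> \<mu> (\<lambda>i. u i + t * v i) = 0}"
  have "card (?chart ` ?R) = card ?R"
    using inj_line_chart[OF assms] by (simp add: card_image inj_on_subset)
  moreover have "pt v \<notin> ?chart ` ?R"
    using pt_notin_line_chart[OF assms] by blast
  ultimately show ?thesis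
    unfolding on_quadric_line_pts
    by (cases "Qmu n \<delta> \<mu> v = 0") simp_all
qed

lemma Qmu_on_span:
  "\<exists>C. \<forall>a b. Qmu n \<delta> \<mu> (\<lambda>i. a * u i + b * v i) =
     a^2 * Qmu n \<delta> \<mu> u + a * b * C + b^2 * Qmu n \<delta> \<mu> (v :: nat \<Rightarrow> 'a::field)"
proof -
  let ?m = "2*n+2"
  have hyperbolic_part: "(\<Sum>i=2..n+1. (a * u i + b * v i) * (a * u (2*n+3-i) + b * v (2*n+3-i))) =
     a^2 * (\<Sum>i=2..n+1. u i * u (2*n+3-i)) + a * b * (\<Sum>i=2..n+1. u i * v (2*n+3-i) + v i * u (2*n+3-i))
     + b^2 * (\<Sum>i=2..n+1. v i * v (2*n+3-i))" for a b
    by (simp add: sum_distrib_left sum.distrib[symmetric] power2_eq_square algebra_simps)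
  \<comment> \<open>the polar form of Qmu at (u, v)\<close>
  define C where "C = 2 * u 1 * v 1 + u 1 * v ?m + u ?m * v 1 + 2 * \<delta> * u ?m * v ?m
       + (\<Sum>i=2..n+1. u i * v (2*n+3-i) + v i * u (2*n+3-i))
       + \<mu> * (2 * u (2*n) * v (2*n) + u (2*n) * v (2*n+1) + v (2*n) * u (2*n+1)
              + 2 * \<delta> * u (2*n+1) * v (2*n+1))"
  show ?thesis
  proof (intro exI[of _ C] allI)
    fix a b :: 'a
    show "Qmu n \<delta> \<mu> (\<lambda>i. a * u i + b * v i) =
      a^2 * Qmu n \<delta> \<mu> u + a * b * C + b^2 * Qmu n \<delta> \<mu> v"
      unfolding Qmu_def hyperbolic_part C_def by (simp add: power2_eq_square algebra_simps)
  qed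
qed

lemma card_on_quadric_line_pts_cases:
  fixes u v :: "nat \<Rightarrow> 'a::{field,finite}"
  assumes indep: "independent_pair u v"
  shows "card (on_quadric n \<delta> \<mu> (line_pts u v)) \<in> {0, 1, 2, CARD('a) + 1}"
proof -
  let ?A = "Qmu n \<delta> \<mu> u" and ?B = "Qmu n \<delta> \<mu> v"
  obtain C where C: "\<And>a b. Qmu n \<delta> \<mu> (\<lambda>i. a * u i + b * v i) = a^2 * ?A + a * b * C + b^2 * ?B"
    using Qmu_on_span by blast
  have chart: "Qmu n \<delta> \<mu> (\<lambda>i. u i + t * v i) = poly [:?A, C, ?B:] t" for t
    using C[of 1 t] by (simp add: power2_eq_square algebra_simps)
  show ?thesis
  proof (cases "[:?A, C, ?B:] = 0")
    case True
    then have "on_quadric n \<delta> \<mu> (line_pts u v) = insert (pt v) (range (\<lambda>t. pt (\<lambda>i. u i + t * v i)))"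
      unfolding on_quadric_line_pts chart by auto
    also have "\<dots> = line_pts u v" by (rule line_pts_eq_chart[symmetric])
    finally show ?thesis using card_line_pts[OF indep] by simp
  next
    case False
    then have "card {t. poly [:?A, C, ?B:] t = 0} \<le> degree [:?A, C, ?B:]"
      by (rule card_poly_roots_bound)
    moreover have "degree [:?A, C, ?B:] \<le> (if ?B = 0 then 1 else 2)" by simp
    ultimately have "card (on_quadric n \<delta> \<mu> (line_pts u v)) \<le> 2"
      by (simp add: card_on_quadric_line_pts[OF indep] chart split: if_splits)
    then show ?thesis by auto
  qed
qed

text \<open>B0 pairs coordinate 2 with 2n+1 and 3 with 2n, hence the names yk for the partner of xk.\<close>

definition vec4 :: "nat \<Rightarrow> 'a::field \<Rightarrow> 'a \<Rightarrow> 'a \<Rightarrow> 'a \<Rightarrow> nat \<Rightarrow> 'a" where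
  "vec4 n x2 x3 y3 y2 = (\<lambda>i. if i = 2 then x2 else if i = 3 then x3
     else if i = 2*n then y3 else if i = 2*n+1 then y2 else 0)"

lemma vec4_lincomb:
  "(\<lambda>i. a * vec4 n x2 x3 y3 y2 i + b * vec4 n x2' x3' y3' y2' i) =
     vec4 n (a * x2 + b * x2') (a * x3 + b * x3') (a * y3 + b * y3') (a * y2 + b * y2')"
  by (simp add: vec4_def fun_eq_iff)

lemma vec4_chart:
  "(\<lambda>i. vec4 n x2 x3 y3 y2 i + t * vec4 n x2' x3' y3' y2' i) =
     vec4 n (x2 + t * x2') (x3 + t * x3') (y3 + t * y3') (y2 + t * y2')"
  using vec4_lincomb[of 1] by simp

lemma vec4_in_vecs: "n \<ge> 2 \<Longrightarrow> vec4 n x2 x3 y3 y2 \<in> vecs n"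
  by (simp add: vec4_def vecs_def)

lemma Qmu_vec4:
  assumes "n \<ge> 2"
  shows "Qmu n \<delta> \<mu> (vec4 n x2 x3 y3 y2) = x2 * y2 + x3 * y3 + \<mu> * (y3^2 + y3 * y2 + \<delta> * y2^2)"
proof -
  have "(\<Sum>i=2..n+1. vec4 n x2 x3 y3 y2 i * vec4 n x2 x3 y3 y2 (2*n+3-i)) =
        (\<Sum>i\<in>{2,3}. vec4 n x2 x3 y3 y2 i * vec4 n x2 x3 y3 y2 (2*n+3-i))"
    by (rule sum.mono_neutral_right) (use assms in \<open>auto simp: vec4_def\<close>)
  then show ?thesis unfolding Qmu_def using assms by (simp add: vec4_def)
qed

lemma B0_vec4:
  assumes "n \<ge> 2"
  shows "B0 n (vec4 n x2 x3 y3 y2) (vec4 n x2' x3' y3' y2') = x2 * y2' + x3 * y3' + y3 * x3' + y2 * x2'"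
proof -
  have "B0 n (vec4 n x2 x3 y3 y2) (vec4 n x2' x3' y3' y2') =
        (\<Sum>i\<in>{2,3,2*n,2*n+1}. vec4 n x2 x3 y3 y2 i * vec4 n x2' x3' y3' y2' (2*n+3-i))"
    unfolding B0_def by (rule sum.mono_neutral_right) (use assms in \<open>auto simp: vec4_def\<close>)
  also have "\<dots> = x2 * y2' + x3 * y3' + y3 * x3' + y2 * x2'"
    using assms by (simp add: vec4_def algebra_simps)
  finally show ?thesis .
qed

lemma independent_pair_vec4:
  assumes "n \<ge> 2"
    and "\<And>a b. a * x2 + b * x2' = 0 \<Longrightarrow> a * x3 + b * x3' = 0 \<Longrightarrow> a * y3 + b * y3' = 0
           \<Longrightarrow> a * y2 + b * y2' = 0 \<Longrightarrow> a = 0 \<and> b = 0"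
  shows "independent_pair (vec4 n x2 x3 y3 y2) (vec4 n x2' x3' y3' y2')"
  unfolding independent_pair_def
proof (intro allI impI)
  fix a b assume "\<forall>i. a * vec4 n x2 x3 y3 y2 i + b * vec4 n x2' x3' y3' y2' i = 0"
  then have coord: "a * vec4 n x2 x3 y3 y2 i + b * vec4 n x2' x3' y3' y2' i = 0" for i by blast
  show "a = 0 \<and> b = 0"
  proof (rule assms(2))
    show "a * x2 + b * x2' = 0" using coord[of 2] by (simp add: vec4_def)
    show "a * x3 + b * x3' = 0" using coord[of 3] by (simp add: vec4_def)
    show "a * y3 + b * y3' = 0" using coord[of "2*n"] assms(1) by (simp add: vec4_def)
    show "a * y2 + b * y2' = 0" using coord[of "2*n+1"] assms(1) by (simp add: vec4_def)
  qed
qed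

lemma W0_line_vec4:
  fixes x2 :: "'a::field"
  assumes n: "n \<ge> 2" and two: "(2::'a) = 0"
    and indep: "independent_pair (vec4 n x2 x3 y3 y2) (vec4 n x2' x3' y3' y2')"
    and orth: "x2 * y2' + x3 * y3' + y3 * x3' + y2 * x2' = 0"
  shows "W0_line n (line_pts (vec4 n x2 x3 y3 y2) (vec4 n x2' x3' y3' y2'))"
proof -
  have bilinear: "B0 n (\<lambda>i. a * vec4 n x2 x3 y3 y2 i + b * vec4 n x2' x3' y3' y2' i)
             (\<lambda>i. c * vec4 n x2 x3 y3 y2 i + d * vec4 n x2' x3' y3' y2' i)
        = 2 * (a * c * (x2 * y2 + x3 * y3) + b * d * (x2' * y2' + x3' * y3'))
          + (a * d + b * c) * (x2 * y2' + x3 * y3' + y3 * x3' + y2 * x2')" for a b c d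
    using n by (simp add: vec4_lincomb B0_vec4 algebra_simps)
  then have "\<forall>a b c d. B0 n (\<lambda>i. a * vec4 n x2 x3 y3 y2 i + b * vec4 n x2' x3' y3' y2' i)
             (\<lambda>i. c * vec4 n x2 x3 y3 y2 i + d * vec4 n x2' x3' y3' y2' i) = 0"
    using two orth by simp
  then show ?thesis
    unfolding W0_line_def independent_pair_def[symmetric] using n indep vec4_in_vecs by blast
qed

lemma exterior_W0_line:
  fixes \<delta> \<mu> :: "'a::{field,finite}"
  assumes n: "n \<ge> 2" and two: "(2::'a) = 0" and \<mu>: "\<mu> \<noteq> 0" and irr: "irreducible [:\<delta>, 1, 1:]"
  shows "\<exists>L. W0_line n L \<and> card (on_quadric n \<delta> \<mu> L) = 0"
proof -
  let ?u = "vec4 n 0 0 0 1" and ?v = "vec4 n 0 0 1 0"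
  have indep: "independent_pair ?u ?v" using n by (rule independent_pair_vec4) simp
  have "Qmu n \<delta> \<mu> (\<lambda>i. ?u i + t * ?v i) = \<mu> * poly [:\<delta>, 1, 1:] t" for t
    unfolding vec4_chart Qmu_vec4[OF n] by (simp add: power2_eq_square algebra_simps)
  moreover have "poly [:\<delta>, 1, 1:] t \<noteq> 0" for t
    using root_imp_reducible_poly[of "[:\<delta>, 1, 1:]" t] irr by auto
  ultimately have "Qmu n \<delta> \<mu> (\<lambda>i. ?u i + t * ?v i) \<noteq> 0" for t
    using \<mu> by simp
  then have "card (on_quadric n \<delta> \<mu> (line_pts ?u ?v)) = 0"
    using n \<mu> by (simp add: card_on_quadric_line_pts[OF indep] Qmu_vec4)
  then show ?thesis using W0_line_vec4[OF n two indep] by auto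
qed

lemma tangent_W0_line:
  fixes \<delta> \<mu> :: "'a::{field,finite}"
  assumes n: "n \<ge> 2" and two: "(2::'a) = 0" and \<mu>: "\<mu> \<noteq> 0"
  shows "\<exists>L. W0_line n L \<and> card (on_quadric n \<delta> \<mu> L) = 1"
proof -
  let ?u = "vec4 n 1 0 0 0" and ?v = "vec4 n 0 0 1 0"
  have indep: "independent_pair ?u ?v" using n by (rule independent_pair_vec4) simp
  have "{t. Qmu n \<delta> \<mu> (\<lambda>i. ?u i + t * ?v i) = 0} = {0}"
    using n \<mu> by (simp add: vec4_chart Qmu_vec4)
  then have "card (on_quadric n \<delta> \<mu> (line_pts ?u ?v)) = 1"
    using n \<mu> by (simp add: card_on_quadric_line_pts[OF indep] Qmu_vec4)
  then show ?thesis using W0_line_vec4[OF n two indep] by auto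
qed

lemma secant_W0_line:
  fixes \<delta> \<mu> :: "'a::{field,finite}"
  assumes n: "n \<ge> 2" and two: "(2::'a) = 0" and \<mu>: "\<mu> \<noteq> 0"
  shows "\<exists>L. W0_line n L \<and> card (on_quadric n \<delta> \<mu> L) = 2"
proof -
  let ?u = "vec4 n (- (\<mu> * \<delta>)) 0 0 1" and ?v = "vec4 n 0 0 1 0"
  have indep: "independent_pair ?u ?v" using n by (rule independent_pair_vec4) simp
  have "Qmu n \<delta> \<mu> (\<lambda>i. ?u i + t * ?v i) = \<mu> * (t * (t + 1))" for t
    unfolding vec4_chart Qmu_vec4[OF n] by (simp add: power2_eq_square algebra_simps)
  then have "{t. Qmu n \<delta> \<mu> (\<lambda>i. ?u i + t * ?v i) = 0} = {0, -1}"
    using \<mu> by (auto simp: add_eq_0_iff minus_equation_iff[of _ 1])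
  then have "card (on_quadric n \<delta> \<mu> (line_pts ?u ?v)) = 2"
    using n \<mu> by (simp add: card_on_quadric_line_pts[OF indep] Qmu_vec4)
  then show ?thesis using W0_line_vec4[OF n two indep] by auto
qed

lemma W0_line_on_quadric:
  fixes \<delta> \<mu> :: "'a::{field,finite}"
  assumes n: "n \<ge> 2" and two: "(2::'a) = 0"
  shows "\<exists>L. W0_line n L \<and> card (on_quadric n \<delta> \<mu> L) = CARD('a) + 1"
proof -
  let ?u = "vec4 n 1 0 0 0" and ?v = "vec4 n 0 1 0 0"
  have indep: "independent_pair ?u ?v" using n by (rule independent_pair_vec4) simp
  have "card (on_quadric n \<delta> \<mu> (line_pts ?u ?v)) = CARD('a) + 1"
    using n by (simp add: card_on_quadric_line_pts[OF indep] vec4_chart Qmu_vec4)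
  then show ?thesis using W0_line_vec4[OF n two indep] by auto
qed

theorem mainTheorem8:
  fixes \<delta> \<mu> :: "'a::{field,finite}" and n :: nat
  assumes "even CARD('a)"
    and "n \<ge> 2"
    and "irreducible [:\<delta>, 1, 1:]"
    and "\<mu> \<noteq> 0"
  shows "(\<forall>L. W0_line n L \<longrightarrow>
            card (on_quadric n \<delta> \<mu> L) \<in> {0, 1, 2, CARD('a) + 1})
       \<and> (\<forall>k \<in> {0, 1, 2, CARD('a) + 1}.
            \<exists>L. W0_line n L \<and> card (on_quadric n \<delta> \<mu> L) = k)"
proof
  show "\<forall>L. W0_line n L \<longrightarrow> card (on_quadric n \<delta> \<mu> L) \<in> {0, 1, 2, CARD('a) + 1}"
  proof (intro allI impI)
    fix L :: "(nat \<Rightarrow> 'a) set set" assume "W0_line n L"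
    then obtain u v :: "nat \<Rightarrow> 'a" where "independent_pair u v" "L = line_pts u v"
      unfolding W0_line_def independent_pair_def by blast
    then show "card (on_quadric n \<delta> \<mu> L) \<in> {0, 1, 2, CARD('a) + 1}"
      by (simp only: card_on_quadric_line_pts_cases)
  qed
  have two: "(2::'a) = 0" using assms(1) by (rule two_eq_zero_if_even_card)
  show "\<forall>k \<in> {0, 1, 2, CARD('a) + 1}. \<exists>L. W0_line n L \<and> card (on_quadric n \<delta> \<mu> L) = k"
    using exterior_W0_line[OF assms(2) two assms(4,3)] tangent_W0_line[OF assms(2) two assms(4)]
      secant_W0_line[OF assms(2) two assms(4)] W0_line_on_quadric[OF assms(2) two]
    by blast
qed

end
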